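(* Let $\varphi:S^1\to S^1$ be a minimal orientation preserving circle homeomorphism (equivalently, conjugate to an irrational rotation) with lift $\Phi:\mathbb{R}\to\mathbb{R}$, and let $x_0\in\mathbb{R}$ be arbitrary. Then the curlicue $\Gamma(x_0)$ generated by the orbit $u_n=\Phi^n(x_0)$ is bounded and superficial if and only if the cohomological equation $$\exp(2\pi\imath x)+u(x)=u(\varphi(x))\quad\text{for all }x$$ has a continuous solution $u:S^1\to\mathbb{C}$. Moreover, if $\Gamma(x_0)$ is bounded, then $\lim_{N\to\infty}\frac1N\sum_{k=0}^{N-1}\exp(2\pi\imath\Phi^k(x_0))=0$ and the vertices $z_n$ of $\Gamma(x_0)$ lie on the curve $u(S^1)\subset\mathbb{C}$, where $u$ is the continuous solution of the cohomological equation with $u(x_0)=0$ (indeed $z_n=u(\varphi^n(x_0))$).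
   Context: Identify $S^1=\mathbb{R}/\mathbb{Z}$ via $x\mapsto\exp(2\pi\imath x)$, and identify $\varphi$ with $\Phi\bmod 1$; functions on $S^1$ are viewed as $1$-periodic functions on $\mathbb{R}$. For a real sequence $u=(u_n)_{n\ge0}$, the curlicue is the piecewise linear curve in $\mathbb{C}$ passing consecutively through $z_0=0$ and $z_n=\sum_{k=0}^{n-1}\exp(2\pi\imath u_k)$, $n\ge1$. For $t>0$, $\Gamma_t$ is the initial part of $\Gamma$ of length $t$ and $\Gamma^{\varepsilon}=\{y:\exists x\in\Gamma,|x-y|<\varepsilon\}$. An unbounded curve is superficial if $\lim_{t\to\infty}t/\mathrm{Diam}\,\Gamma_t=\infty$; a bounded curve is superficial if $\lim_{\varepsilon\to0}\mathrm{Area}(\Gamma^{\varepsilon})/\varepsilon=\infty$ (Area = 2-dimensional Lebesgue measure). *)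

theory Defs
  imports "HOL-Analysis.Analysis"
begin

text \<open>S^1 = R/Z; a circle map is represented by its lift Phi : R -> R.\<close>
definition circle_homeo_lift :: "(real \<Rightarrow> real) \<Rightarrow> bool" where
  "circle_homeo_lift \<Phi> \<longleftrightarrow> continuous_on UNIV \<Phi> \<and> strict_mono \<Phi> \<and> (\<forall>x. \<Phi> (x + 1) = \<Phi> x + 1)"

text \<open>Minimality: no nonempty proper closed invariant subset of S^1, phrased via
  1-periodic closed subsets of R (preimages of closed subsets of S^1).\<close>
definition minimal_lift :: "(real \<Rightarrow> real) \<Rightarrow> bool" where
  "minimal_lift \<Phi> \<longleftrightarrow>
     (\<forall>C. closed C \<and> (\<forall>x. x \<in> C \<longleftrightarrow> x + 1 \<in> C) \<and> \<Phi> ` C = C \<longrightarrow> C = {} \<or> C = UNIV)"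

definition curlicue_vertex :: "(nat \<Rightarrow> real) \<Rightarrow> nat \<Rightarrow> complex" where
  "curlicue_vertex u n = (\<Sum>k<n. exp (2 * of_real pi * \<i> * of_real (u k)))"

text \<open>Unit-speed (arc length) parametrisation of the piecewise linear curve
  through z_0, z_1, ...; each segment [z_n, z_(n+1)] has length 1.\<close>
definition curlicue_path :: "(nat \<Rightarrow> real) \<Rightarrow> real \<Rightarrow> complex" where
  "curlicue_path u t =
     curlicue_vertex u (nat \<lfloor>t\<rfloor>) + of_real (t - of_int \<lfloor>t\<rfloor>) * exp (2 * of_real pi * \<i> * of_real (u (nat \<lfloor>t\<rfloor>)))"

definition curlicue :: "(nat \<Rightarrow> real) \<Rightarrow> complex set" where
  "curlicue u = curlicue_path u ` {0..}"

definition curlicue_initial :: "(nat \<Rightarrow> real) \<Rightarrow> real \<Rightarrow> complex set" where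
  "curlicue_initial u t = curlicue_path u ` {0..t}"

definition eps_nbhd :: "complex set \<Rightarrow> real \<Rightarrow> complex set" where
  "eps_nbhd \<Gamma> \<epsilon> = {y. \<exists>x\<in>\<Gamma>. dist x y < \<epsilon>}"

definition superficial :: "(nat \<Rightarrow> real) \<Rightarrow> bool" where
  "superficial u \<longleftrightarrow>
     (if bounded (curlicue u)
      then filterlim (\<lambda>\<epsilon>. measure lborel (eps_nbhd (curlicue u) \<epsilon>) / \<epsilon>) at_top (at_right 0)
      else filterlim (\<lambda>t. t / diameter (curlicue_initial u t)) at_top at_top)"

definition cohom_solution :: "(real \<Rightarrow> real) \<Rightarrow> (real \<Rightarrow> complex) \<Rightarrow> bool" where
  "cohom_solution \<Phi> v \<longleftrightarrow> continuous_on UNIV v \<and> (\<forall>x. v (x + 1) = v x) \<and>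
     (\<forall>x. exp (2 * of_real pi * \<i> * of_real x) + v x = v (\<Phi> x))"

end

theory Submission
  imports Defs "HOL-Library.Periodic_Fun"
begin

text \<open>
  Write \<open>u\<^sub>n = \<Phi>\<^sup>n(x\<^sub>0)\<close> and \<open>z\<^sub>n\<close> for the vertices, so \<open>z\<^sub>n\<^sub>+\<^sub>1 = z\<^sub>n + e(u\<^sub>n)\<close> with
  \<open>e(x) = exp(2\<pi>ix)\<close>. If \<open>v\<close> solves the cohomological equation, then \<open>z\<^sub>n = v(u\<^sub>n) - v(x\<^sub>0)\<close>,
  so the curlicue is bounded. Conversely, if the vertices are bounded, the points \<open>(u\<^sub>n + k, z\<^sub>n)\<close>
  lie in a strip \<open>\<real> \<times> B\<close> and are invariant under the skew product \<open>(x, z) \<mapsto> (\<Phi> x, z + e(x))\<close>.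
  By compactness and Zorn's lemma their closure contains a minimal closed, 1-periodic, invariant
  set \<open>M\<close> (Gottschalk--Hedlund). Its projection to the first factor is closed, periodic and
  \<open>\<Phi>\<close>-invariant, hence everything by minimality of \<open>\<Phi>\<close>; and each fibre of \<open>M\<close> is a single point,
  since otherwise \<open>M\<close> would be invariant under a vertical translation and unbounded. So \<open>M\<close> is
  the graph of a continuous solution.

  A bounded curlicue is automatically superficial: the orbit of a minimal map has no two points
  differing by an integer, so for every \<open>N\<close> there are \<open>N\<close> pairwise non-parallel steps. Cutting
  each of these unit segments into \<open>2N\<close> pieces of length \<open>1/(4N)\<close>, the other lines hit at most
  \<open>N - 1\<close> of them, which leaves \<open>N\<^sup>2\<close> pairwise disjoint pieces. For small \<open>\<epsilon>\<close> their
  \<open>\<epsilon>\<close>-neighbourhoods are disjoint and each has area at least of order \<open>\<epsilon>/N\<close>, so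
  \<open>Area(\<Gamma>\<^sup>\<epsilon>)/\<epsilon> \<ge> N/8\<close>.
\<close>

definition e2pi :: "real \<Rightarrow> complex" where
  "e2pi x = exp (2 * of_real pi * \<i> * of_real x)"

lemma e2pi_eq_cis: "e2pi x = cis (2 * pi * x)"
  by (simp add: e2pi_def cis_conv_exp mult_ac)

interpretation e2pi: periodic_fun_simple' e2pi
proof
  show "e2pi (x + 1) = e2pi x" for x
    by (simp add: e2pi_eq_cis distrib_left cis_mult [symmetric])
qed

lemma norm_e2pi [simp]: "norm (e2pi x) = 1"
  by (simp add: e2pi_eq_cis)

lemma e2pi_neq_0 [simp]: "e2pi x \<noteq> 0"
  using norm_e2pi[of x] by force

lemma continuous_on_e2pi: "continuous_on A e2pi"
  unfolding e2pi_def by (intro continuous_intros)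

lemma Im_e2pi_mult_cnj: "Im (e2pi a * cnj (e2pi b)) = sin (2 * pi * (a - b))"
  by (simp add: e2pi_eq_cis cis_cnj cis_mult algebra_simps)

lemma curlicue_vertex_Suc: "curlicue_vertex u (Suc n) = curlicue_vertex u n + e2pi (u n)"
  by (simp add: curlicue_vertex_def e2pi_def)

lemma curlicue_path_of_nat: "curlicue_path u (real n) = curlicue_vertex u n"
  by (simp add: curlicue_path_def)

lemma bounded_curlicue_iff: "bounded (curlicue u) \<longleftrightarrow> bounded (range (curlicue_vertex u))"
proof
  assume "bounded (curlicue u)"
  moreover have "range (curlicue_vertex u) \<subseteq> curlicue u"
    unfolding curlicue_def by (auto simp flip: curlicue_path_of_nat)
  ultimately show "bounded (range (curlicue_vertex u))" by (rule bounded_subset)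
next
  assume "bounded (range (curlicue_vertex u))"
  then obtain B where B: "\<And>n. norm (curlicue_vertex u n) \<le> B" by (auto simp: bounded_iff)
  have "norm (curlicue_path u t) \<le> B + 1" for t
  proof -
    have "norm (of_real (t - of_int \<lfloor>t\<rfloor>) * e2pi (u (nat \<lfloor>t\<rfloor>))) \<le> 1"
      unfolding norm_mult norm_of_real norm_e2pi mult_1_right
      using of_int_floor_le[of t] real_of_int_floor_add_one_gt[of t] by linarith
    then show ?thesis
      unfolding curlicue_path_def e2pi_def[symmetric]
      using B[of "nat \<lfloor>t\<rfloor>"] norm_triangle_ineq[of "curlicue_vertex u (nat \<lfloor>t\<rfloor>)"
          "of_real (t - of_int \<lfloor>t\<rfloor>) * e2pi (u (nat \<lfloor>t\<rfloor>))"] by linarith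
  qed
  then show "bounded (curlicue u)" unfolding curlicue_def bounded_iff by blast
qed

lemma bounded_range_divide_of_nat_tendsto_0:
  fixes f :: "nat \<Rightarrow> 'a::real_normed_field"
  assumes "bounded (range f)"
  shows "(\<lambda>n. f n / of_nat n) \<longlonglongrightarrow> 0"
proof -
  obtain B where "\<And>n. norm (f n) \<le> B" using assms by (auto simp: bounded_iff)
  then have "\<forall>\<^sub>F n in sequentially. norm (f n / of_nat n) \<le> B / real n"
    by (simp add: norm_divide divide_right_mono)
  then show ?thesis using lim_const_over_n by (rule Lim_null_comparison)
qed

lemma subset_Zorn_minimal:
  assumes "\<A> \<noteq> {}" and ch: "\<And>\<C>. \<C> \<noteq> {} \<Longrightarrow> subset.chain \<A> \<C> \<Longrightarrow> \<Inter>\<C> \<in> \<A>"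
  shows "\<exists>M\<in>\<A>. \<forall>X\<in>\<A>. X \<subseteq> M \<longrightarrow> X = M"
proof -
  have "\<exists>M\<in>uminus ` \<A>. \<forall>X\<in>uminus ` \<A>. M \<subseteq> X \<longrightarrow> X = M"
  proof (rule subset_Zorn_nonempty)
    show "uminus ` \<A> \<noteq> {}" using assms(1) by simp
    fix \<C> assume "\<C> \<noteq> {}" and "subset.chain (uminus ` \<A>) \<C>"
    then have "uminus ` \<C> \<noteq> {}" and "subset.chain \<A> (uminus ` \<C>)"
      unfolding subset_chain_def by (auto simp: image_subset_iff)
    then have "\<Inter>(uminus ` \<C>) \<in> \<A>" by (rule ch)
    moreover have "\<Union>\<C> = - \<Inter>(uminus ` \<C>)" by auto
    ultimately show "\<Union>\<C> \<in> uminus ` \<A>" by blast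
  qed
  then obtain N where "N \<in> \<A>" and "\<forall>X\<in>uminus ` \<A>. - N \<subseteq> X \<longrightarrow> X = - N"
    by (blast dest: bex_imageD)
  note N = this(1) ball_imageD[OF this(2), rule_format]
  show ?thesis
  proof (intro bexI[of _ N] ballI impI)
    fix X assume "X \<in> \<A>" "X \<subseteq> N"
    then have "- X = - N" by (intro N(2) compl_mono)
    then show "X = N" by simp
  qed (rule N(1))
qed

text \<open>These are the preimages of subsets of \<open>S\<^sup>1 \<times> _\<close> under the covering map.\<close>

definition periodic_in_fst :: "(real \<times> 'a) set \<Rightarrow> bool" where
  "periodic_in_fst M \<longleftrightarrow> (\<forall>x z. (x + 1, z) \<in> M \<longleftrightarrow> (x, z) \<in> M)"

lemma periodic_in_fst_add_int:
  assumes "periodic_in_fst M"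
  shows "(x + of_int k, z) \<in> M \<longleftrightarrow> (x, z) \<in> M"
proof -
  interpret periodic_fun_simple' "\<lambda>x. (x, z) \<in> M"
    by unfold_locales (use assms in \<open>simp add: periodic_in_fst_def\<close>)
  show ?thesis by (rule plus_of_int)
qed

lemma periodic_in_fst_meets_unit_strip:
  assumes "periodic_in_fst M" "M \<subseteq> UNIV \<times> S" "M \<noteq> {}"
  shows "M \<inter> ({0..1} \<times> S) \<noteq> {}"
proof -
  obtain x z where xz: "(x, z) \<in> M" using assms(3) by auto
  then have "(x + of_int (- \<lfloor>x\<rfloor>), z) \<in> M" by (simp only: periodic_in_fst_add_int[OF assms(1)])
  moreover have "x + of_int (- \<lfloor>x\<rfloor>) \<in> {0..1}" by simp linarith
  ultimately show ?thesis using xz assms(2) by blast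
qed

section \<open>Lifts of circle homeomorphisms and the skew product\<close>

locale circle_lift =
  fixes \<Phi> :: "real \<Rightarrow> real"
  assumes circle_homeo_lift: "circle_homeo_lift \<Phi>"
begin

lemma continuous: "continuous_on UNIV \<Phi>"
  and strict_mono: "strict_mono \<Phi>"
  and add_1: "\<Phi> (x + 1) = \<Phi> x + 1"
  using circle_homeo_lift by (simp_all add: circle_homeo_lift_def)

lemma add_int: "\<Phi> (x + of_int k) = \<Phi> x + of_int k"
proof -
  interpret periodic_fun_simple' "\<lambda>x. \<Phi> x - x"
    by unfold_locales (simp add: add_1)
  show ?thesis using plus_of_int[of x k] by simp
qed

lemma bij: "bij \<Phi>"
proof (rule bijI)
  show "inj \<Phi>" using strict_mono by (rule strict_mono_imp_inj_on)
  show "surj \<Phi>"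
  proof (rule surjI)
    fix y
    define m where "m = \<lfloor>y - \<Phi> 0\<rfloor>"
    have "of_int m \<le> y - \<Phi> 0" "y - \<Phi> 0 \<le> of_int m + 1"
      unfolding m_def by (simp_all add: of_int_floor_le real_of_int_floor_add_one_ge)
    then have "\<Phi> (of_int m) \<le> y" "y \<le> \<Phi> (of_int m + 1)"
      using add_int[of 0 m] add_int[of 0 "m + 1"] by simp_all
    then have "\<exists>x. of_int m \<le> x \<and> x \<le> of_int m + 1 \<and> \<Phi> x = y"
      by (intro IVT' continuous_on_subset[OF continuous subset_UNIV]) simp_all
    then have "y \<in> range \<Phi>" by blast
    then show "\<Phi> (inv \<Phi> y) = y" by (rule f_inv_into_f)
  qed
qed

lemma inv_apply [simp]: "\<Phi> (inv \<Phi> y) = y" "inv \<Phi> (\<Phi> x) = x"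
  using bij_is_surj[OF bij] bij_is_inj[OF bij] by (simp_all add: surj_f_inv_f)

lemma continuous_inv: "continuous_on UNIV (inv \<Phi>)"
proof -
  have "isCont (inv \<Phi>) (\<Phi> x)" for x
    using continuous
    by (rule_tac isCont_inverse_function[where d = 1]) (auto simp: continuous_on_eq_continuous_at)
  then show ?thesis by (metis continuous_on_eq_continuous_at inv_apply(1) open_UNIV)
qed

lemma inv_add_1: "inv \<Phi> (y + 1) = inv \<Phi> y + 1"
  by (metis add_1 inv_apply)

definition skew :: "real \<times> complex \<Rightarrow> real \<times> complex" where
  "skew = (\<lambda>(x, z). (\<Phi> x, z + e2pi x))"

lemma skew_Pair [simp]: "skew (x, z) = (\<Phi> x, z + e2pi x)"
  by (simp add: skew_def)

lemma continuous_on_skew: "continuous_on A skew"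
  unfolding skew_def case_prod_unfold
  by (intro continuous_intros continuous_on_compose2[OF continuous]
      continuous_on_compose2[OF continuous_on_e2pi]) auto

lemma skew_image_eq_vimage: "skew ` M = (\<lambda>(y, w). (inv \<Phi> y, w - e2pi (inv \<Phi> y))) -` M"
proof
  show "skew ` M \<subseteq> (\<lambda>(y, w). (inv \<Phi> y, w - e2pi (inv \<Phi> y))) -` M" by auto
  show "(\<lambda>(y, w). (inv \<Phi> y, w - e2pi (inv \<Phi> y))) -` M \<subseteq> skew ` M"
  proof clarify
    fix y w assume "(inv \<Phi> y, w - e2pi (inv \<Phi> y)) \<in> M"
    then have "skew (inv \<Phi> y, w - e2pi (inv \<Phi> y)) \<in> skew ` M" by (rule imageI)
    then show "(y, w) \<in> skew ` M" by simp
  qed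
qed

lemma closed_skew_image:
  assumes "closed M"
  shows "closed (skew ` M)"
proof -
  have "continuous_on UNIV (\<lambda>p::real \<times> complex. inv \<Phi> (fst p))"
    by (intro continuous_on_compose2[OF continuous_inv] continuous_intros) auto
  then have "continuous_on UNIV
      (\<lambda>p::real \<times> complex. (inv \<Phi> (fst p), snd p - e2pi (inv \<Phi> (fst p))))"
    by (intro continuous_intros continuous_on_compose2[OF continuous_on_e2pi]) auto
  then show ?thesis
    unfolding skew_image_eq_vimage case_prod_unfold using assms by (rule_tac closed_vimage)
qed

lemma periodic_in_fst_skew_image:
  assumes "periodic_in_fst M"
  shows "periodic_in_fst (skew ` M)"
  using assms unfolding periodic_in_fst_def skew_image_eq_vimage
  by (simp add: inv_add_1 e2pi.plus_1)

end

section \<open>Minimal invariant sets of the skew product (Gottschalk--Hedlund)\<close>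

lemma translate_snd_iff:
  fixes M :: "('a::comm_monoid_add \<times> 'b::ab_group_add) set"
  shows "(a, w) \<in> (+) (0, c) ` M \<longleftrightarrow> (a, w - c) \<in> M"
proof
  assume "(a, w) \<in> (+) (0, c) ` M"
  then obtain p where "p \<in> M" "(a, w) = (0, c) + p" by (rule imageE)
  then show "(a, w - c) \<in> M" by (cases p) simp
next
  assume "(a, w - c) \<in> M"
  then have "(0, c) + (a, w - c) \<in> (+) (0, c) ` M" by (rule imageI)
  then show "(a, w) \<in> (+) (0, c) ` M" by simp
qed

lemma periodic_in_fst_closure:
  fixes A :: "(real \<times> 'a::real_normed_vector) set"
  assumes "periodic_in_fst A"
  shows "periodic_in_fst (closure A)"
proof -
  have shift: "(+) a ` closure A \<subseteq> closure A" if "(+) a ` A \<subseteq> A" for a :: "real \<times> 'a"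
    using that by (metis closure_mono closure_translation)
  have "(+) (of_int k, 0) ` A \<subseteq> A" for k
    by (auto simp: periodic_in_fst_add_int[OF assms] add.commute)
  from this[of 1] this[of "- 1"]
  have "(+) (1, 0) ` A \<subseteq> A" "(+) (- 1, 0) ` A \<subseteq> A" by simp_all
  then have up: "(1, 0) + p \<in> closure A" and down: "(- 1, 0) + p \<in> closure A"
    if "p \<in> closure A" for p
    using shift that by blast+
  show ?thesis
    unfolding periodic_in_fst_def
  proof (intro allI iffI)
    fix x z assume "(x + 1, z) \<in> closure A"
    from down[OF this] show "(x, z) \<in> closure A" by simp
  next
    fix x z assume "(x, z) \<in> closure A"
    from up[OF this] show "(x + 1, z) \<in> closure A" by (simp add: add.commute)
  qed
qed

context circle_lift
begin

definition skew_invariant :: "real \<Rightarrow> (real \<times> complex) set \<Rightarrow> bool" where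
  "skew_invariant B M \<longleftrightarrow>
     closed M \<and> M \<noteq> {} \<and> M \<subseteq> UNIV \<times> cball 0 B \<and> periodic_in_fst M \<and> skew ` M \<subseteq> M"

definition minimal_skew_invariant :: "real \<Rightarrow> (real \<times> complex) set \<Rightarrow> bool" where
  "minimal_skew_invariant B M \<longleftrightarrow>
     skew_invariant B M \<and> (\<forall>X. skew_invariant B X \<longrightarrow> X \<subseteq> M \<longrightarrow> X = M)"

lemma minimal_skew_invariantD:
  "skew_invariant B X \<Longrightarrow> X \<subseteq> M \<Longrightarrow> minimal_skew_invariant B M \<Longrightarrow> X = M"
  by (simp add: minimal_skew_invariant_def)

lemma skew_invariant_Inter_chain:
  assumes "\<C> \<noteq> {}" and chain: "subset.chain {M. skew_invariant B M} \<C>"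
  shows "skew_invariant B (\<Inter>\<C>)"
proof -
  have inv: "skew_invariant B M" if "M \<in> \<C>" for M
    using chain that by (auto simp: subset_chain_def)
  define K where "K = {0..1::real} \<times> cball (0::complex) B"
  have "\<Inter>((\<lambda>M. M \<inter> K) ` \<C>) \<noteq> {}"
  proof (rule compact_chain)
    show "compact S" if "S \<in> (\<lambda>M. M \<inter> K) ` \<C>" for S
      using that inv unfolding K_def skew_invariant_def
      by (auto intro!: closed_Int_compact compact_Times)
    show "{} \<notin> (\<lambda>M. M \<inter> K) ` \<C>"
    proof
      assume "{} \<in> (\<lambda>M. M \<inter> K) ` \<C>"
      then obtain M where "M \<in> \<C>" "M \<inter> K = {}" by auto
      with inv show False
        using periodic_in_fst_meets_unit_strip unfolding K_def skew_invariant_def by blast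
    qed
    show "S \<subseteq> T \<or> T \<subseteq> S" if "S \<in> (\<lambda>M. M \<inter> K) ` \<C> \<and> T \<in> (\<lambda>M. M \<inter> K) ` \<C>" for S T
      using that chain unfolding subset_chain_def by blast
  qed
  then have "\<Inter>\<C> \<noteq> {}" by blast
  moreover obtain M where "M \<in> \<C>" using assms(1) by blast
  ultimately show ?thesis
    unfolding skew_invariant_def
  proof (intro conjI)
    show "closed (\<Inter>\<C>)" using inv by (intro closed_Inter) (simp add: skew_invariant_def)
    show "\<Inter>\<C> \<subseteq> UNIV \<times> cball 0 B" using \<open>M \<in> \<C>\<close> inv[of M] by (auto simp: skew_invariant_def)
    show "periodic_in_fst (\<Inter>\<C>)"
      using inv by (simp add: skew_invariant_def periodic_in_fst_def)
    show "skew ` \<Inter>\<C> \<subseteq> \<Inter>\<C>" using inv unfolding skew_invariant_def by blast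
  qed
qed

lemma exists_minimal_skew_invariant:
  assumes "skew_invariant B M\<^sub>0"
  shows "\<exists>M. minimal_skew_invariant B M"
proof -
  have "\<exists>M\<in>{M. skew_invariant B M}. \<forall>X\<in>{M. skew_invariant B M}. X \<subseteq> M \<longrightarrow> X = M"
    using assms skew_invariant_Inter_chain by (intro subset_Zorn_minimal) auto
  then show ?thesis unfolding minimal_skew_invariant_def by blast
qed

lemma minimal_skew_invariant_image:
  assumes "minimal_skew_invariant B M"
  shows "skew ` M = M"
proof -
  have "skew_invariant B M" using assms by (simp add: minimal_skew_invariant_def)
  then have sub: "skew ` M \<subseteq> M" by (simp add: skew_invariant_def)
  have "skew_invariant B (skew ` M)"
    using \<open>skew_invariant B M\<close> unfolding skew_invariant_def
  proof (elim conjE, intro conjI)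
    show "closed M \<Longrightarrow> closed (skew ` M)" by (rule closed_skew_image)
    show "periodic_in_fst M \<Longrightarrow> periodic_in_fst (skew ` M)" by (rule periodic_in_fst_skew_image)
    show "skew ` skew ` M \<subseteq> skew ` M" using sub by (rule image_mono)
    show "M \<noteq> {} \<Longrightarrow> skew ` M \<noteq> {}" by simp
    show "M \<subseteq> UNIV \<times> cball 0 B \<Longrightarrow> skew ` M \<subseteq> UNIV \<times> cball 0 B" using sub by (rule order_trans)
  qed
  then show ?thesis using sub assms by (rule minimal_skew_invariantD)
qed

lemma skew_invariant_Int_translate:
  assumes inv: "skew_invariant B M" and "(x, z) \<in> M" "(x, z - c) \<in> M"
  shows "skew_invariant B (M \<inter> (+) (0, c) ` M)"
  unfolding skew_invariant_def
proof (intro conjI)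
  have M: "closed M" "M \<subseteq> UNIV \<times> cball 0 B" "periodic_in_fst M" "skew ` M \<subseteq> M"
    using inv by (simp_all add: skew_invariant_def)
  show "closed (M \<inter> (+) (0, c) ` M)" using M(1) by (intro closed_Int closed_translation)
  show "M \<inter> (+) (0, c) ` M \<noteq> {}" using assms(2,3) by (auto simp: translate_snd_iff)
  show "M \<inter> (+) (0, c) ` M \<subseteq> UNIV \<times> cball 0 B" using M(2) by blast
  show "periodic_in_fst (M \<inter> (+) (0, c) ` M)"
    using M(3) by (simp add: periodic_in_fst_def translate_snd_iff)
  show "skew ` (M \<inter> (+) (0, c) ` M) \<subseteq> M \<inter> (+) (0, c) ` M"
  proof (rule image_subsetI)
    fix p assume p: "p \<in> M \<inter> (+) (0, c) ` M"
    obtain a w where [simp]: "p = (a, w)" by fastforce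
    from p have "(a, w) \<in> M" "(a, w - c) \<in> M" by (simp_all add: translate_snd_iff)
    then have "skew (a, w) \<in> M" "skew (a, w - c) \<in> M"
      using M(4) by (simp_all only: image_subset_iff)
    then show "skew p \<in> M \<inter> (+) (0, c) ` M" by (simp add: translate_snd_iff diff_add_eq)
  qed
qed

text \<open>If a fibre of a minimal set contained two points at vertical distance \<open>c \<noteq> 0\<close>, the set
  would be invariant under the vertical translation by \<open>-c\<close>, contradicting boundedness.\<close>

lemma minimal_skew_invariant_fibre:
  assumes min: "minimal_skew_invariant B M" and z1: "(x, z\<^sub>1) \<in> M" and z2: "(x, z\<^sub>2) \<in> M"
  shows "z\<^sub>1 = z\<^sub>2"
proof -
  define c where "c = z\<^sub>2 - z\<^sub>1"
  have inv: "skew_invariant B M" using min by (simp add: minimal_skew_invariant_def)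
  have "(x, z\<^sub>2 - c) \<in> M" using z1 by (simp add: c_def)
  then have "M \<inter> (+) (0, c) ` M = M"
    using skew_invariant_Int_translate[OF inv z2] min by (intro minimal_skew_invariantD) auto
  then have down: "(a, w - c) \<in> M" if "(a, w) \<in> M" for a w
    using that translate_snd_iff by blast
  have iterate: "(x, z\<^sub>2 - of_nat k * c) \<in> M" for k
  proof (induction k)
    case (Suc k)
    then show ?case using down[of x "z\<^sub>2 - of_nat k * c"] by (simp add: algebra_simps)
  qed (simp add: z2)
  have "of_nat k * norm c \<le> 2 * B" for k
  proof -
    have "norm (z\<^sub>2 - of_nat k * c) \<le> B" "norm z\<^sub>2 \<le> B"
      using iterate[of k] z2 inv by (auto simp: skew_invariant_def)
    then have "norm (z\<^sub>2 - (z\<^sub>2 - of_nat k * c)) \<le> 2 * B"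
      using norm_triangle_ineq4[of z\<^sub>2 "z\<^sub>2 - of_nat k * c"] by linarith
    then show ?thesis by (simp add: norm_mult)
  qed
  then have "c = 0"
    using ex_less_of_nat_mult[of "norm c" "2 * B"] by (metis not_less zero_less_norm_iff)
  then show ?thesis by (simp add: c_def)
qed

lemma cohom_solution_of_graph:
  assumes inv: "skew_invariant B M" and graph: "\<And>x. \<exists>!z. (x, z) \<in> M"
  shows "cohom_solution \<Phi> (\<lambda>x. THE z. (x, z) \<in> M)"
proof -
  define v where "v x = (THE z. (x, z) \<in> M)" for x
  have vM: "(x, v x) \<in> M" for x
    unfolding v_def using graph by (rule theI')
  have v_eq: "v x = z" if "(x, z) \<in> M" for x z
    unfolding v_def using graph that by (rule the1_equality)
  have M: "closed M" "M \<subseteq> UNIV \<times> cball 0 B" "periodic_in_fst M" "skew ` M \<subseteq> M"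
    using inv by (simp_all add: skew_invariant_def)
  have "(\<lambda>x. (x, v x)) ` UNIV = M"
  proof
    show "(\<lambda>x. (x, v x)) ` UNIV \<subseteq> M" using vM by auto
    show "M \<subseteq> (\<lambda>x. (x, v x)) ` UNIV"
    proof clarify
      fix x z assume "(x, z) \<in> M"
      then have "(x, z) = (x, v x)" by (simp add: v_eq)
      then show "(x, z) \<in> (\<lambda>x. (x, v x)) ` UNIV" by (rule image_eqI) simp
    qed
  qed
  moreover have "v \<in> UNIV \<rightarrow> cball 0 B" using vM M(2) by auto
  ultimately have "continuous_on UNIV v"
    using M(1) by (intro continuous_from_closed_graph[OF compact_cball]) simp_all
  moreover have "v (x + 1) = v x" for x
    using vM[of x] M(3) by (intro v_eq) (simp add: periodic_in_fst_def)
  moreover have "e2pi x + v x = v (\<Phi> x)" for x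
  proof -
    have "skew (x, v x) \<in> M" by (rule subsetD[OF M(4) imageI[OF vM]])
    then show ?thesis by (simp add: v_eq add.commute)
  qed
  ultimately show ?thesis unfolding cohom_solution_def v_def[symmetric] e2pi_def by blast
qed

lemma skew_invariant_orbit_closure:
  fixes x\<^sub>0 :: real
  defines "u \<equiv> \<lambda>n. (\<Phi> ^^ n) x\<^sub>0"
  assumes bounded: "\<And>n. norm (curlicue_vertex u n) \<le> B"
  shows "skew_invariant B (closure {(u n + of_int k, curlicue_vertex u n) | n k. True})"
    (is "skew_invariant B (closure ?A)")
proof -
  have "?A \<subseteq> UNIV \<times> cball 0 B" using bounded by auto
  then have "closure ?A \<subseteq> UNIV \<times> cball 0 B"
    by (rule closure_minimal) (simp add: closed_Times)
  moreover have "periodic_in_fst ?A"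
    unfolding periodic_in_fst_def
  proof (intro allI iffI)
    fix x z assume "(x + 1, z) \<in> ?A"
    then obtain n k where "x + 1 = u n + of_int k" "z = curlicue_vertex u n" by blast
    then have "x = u n + of_int (k - 1)" "z = curlicue_vertex u n" by simp_all
    then show "(x, z) \<in> ?A" by blast
  next
    fix x z assume "(x, z) \<in> ?A"
    then obtain n k where "x = u n + of_int k" "z = curlicue_vertex u n" by blast
    then have "x + 1 = u n + of_int (k + 1)" "z = curlicue_vertex u n" by simp_all
    then show "(x + 1, z) \<in> ?A" by blast
  qed
  moreover have "skew ` ?A \<subseteq> ?A"
  proof (rule image_subsetI)
    fix p assume "p \<in> ?A"
    then obtain n k where "p = (u n + of_int k, curlicue_vertex u n)" by blast
    then have "skew p = (u (Suc n) + of_int k, curlicue_vertex u (Suc n))"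
      by (simp add: u_def add_int e2pi.plus_of_int curlicue_vertex_Suc)
    then show "skew p \<in> ?A" by blast
  qed
  then have "skew ` closure ?A \<subseteq> closure ?A"
    by (intro image_closure_subset continuous_on_skew) (auto intro: closure_subset[THEN subsetD])
  moreover have "?A \<noteq> {}" by blast
  ultimately show ?thesis
    by (simp add: skew_invariant_def periodic_in_fst_closure)
qed

end

locale minimal_circle_lift = circle_lift +
  assumes minimal: "minimal_lift \<Phi>"
begin

lemma minimal_skew_invariant_fst:
  assumes "minimal_skew_invariant B M"
  shows "fst ` M = UNIV"
proof -
  have inv: "skew_invariant B M" using assms by (simp add: minimal_skew_invariant_def)
  then have "closedin (top_of_set (UNIV \<times> cball 0 B)) M"
    by (intro closed_subset) (simp_all add: skew_invariant_def)
  then have "closedin (top_of_set UNIV) (fst ` M)"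
    by (rule Starlike.closed_map_fst[OF compact_cball])
  then have "closed (fst ` M)"
    unfolding closedin_closed_eq[OF closed_UNIV] by (rule conjunct1)
  moreover have "\<forall>x. x \<in> fst ` M \<longleftrightarrow> x + 1 \<in> fst ` M"
    using inv by (simp add: skew_invariant_def periodic_in_fst_def fst_eq_Domain Domain_iff)
  moreover have "\<Phi> ` fst ` M = fst ` M"
  proof -
    have "\<Phi> ` fst ` M = fst ` skew ` M" by (simp add: image_image skew_def case_prod_unfold)
    then show ?thesis using minimal_skew_invariant_image[OF assms] by simp
  qed
  moreover have "fst ` M \<noteq> {}" using inv by (simp add: skew_invariant_def)
  ultimately show ?thesis
    using minimal[unfolded minimal_lift_def, rule_format, of "fst ` M"] by simp
qed

lemma cohom_solution_if_skew_invariant: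
  assumes "skew_invariant B M\<^sub>0"
  shows "\<exists>v. cohom_solution \<Phi> v"
proof -
  obtain M where min: "minimal_skew_invariant B M"
    using exists_minimal_skew_invariant[OF assms] by blast
  have "\<exists>!z. (x, z) \<in> M" for x
  proof -
    have "x \<in> fst ` M" using minimal_skew_invariant_fst[OF min] by simp
    then obtain z where "(x, z) \<in> M" by force
    then show ?thesis using minimal_skew_invariant_fibre[OF min] by blast
  qed
  then show ?thesis
    using min cohom_solution_of_graph unfolding minimal_skew_invariant_def by blast
qed

theorem cohom_solution_if_bounded_curlicue:
  assumes "bounded (curlicue (\<lambda>n. (\<Phi> ^^ n) x\<^sub>0))"
  shows "\<exists>v. cohom_solution \<Phi> v"
proof -
  have "bounded (range (curlicue_vertex (\<lambda>n. (\<Phi> ^^ n) x\<^sub>0)))"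
    using assms by (simp only: bounded_curlicue_iff)
  then obtain B where "\<And>n. norm (curlicue_vertex (\<lambda>n. (\<Phi> ^^ n) x\<^sub>0) n) \<le> B"
    by (auto simp: bounded_iff)
  then show ?thesis by (rule cohom_solution_if_skew_invariant[OF skew_invariant_orbit_closure])
qed

end

section \<open>Consequences of the cohomological equation\<close>

lemma cohom_solution_curlicue_vertex:
  assumes "cohom_solution \<Phi> v"
  shows "curlicue_vertex (\<lambda>n. (\<Phi> ^^ n) x\<^sub>0) n = v ((\<Phi> ^^ n) x\<^sub>0) - v x\<^sub>0"
proof (induction n)
  case (Suc n)
  have "v ((\<Phi> ^^ Suc n) x\<^sub>0) = e2pi ((\<Phi> ^^ n) x\<^sub>0) + v ((\<Phi> ^^ n) x\<^sub>0)"
    using assms by (simp add: cohom_solution_def e2pi_def)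
  then show ?case using Suc by (simp add: curlicue_vertex_Suc)
qed (simp add: curlicue_vertex_def)

lemma cohom_solution_diff_const:
  assumes "cohom_solution \<Phi> v"
  shows "cohom_solution \<Phi> (\<lambda>x. v x - c)"
  using assms unfolding cohom_solution_def by (auto intro: continuous_intros)

lemma bounded_range_cohom_solution:
  assumes "cohom_solution \<Phi> v"
  shows "bounded (range v)"
proof -
  interpret periodic_fun_simple' v
    using assms by unfold_locales (simp add: cohom_solution_def)
  have "range v \<subseteq> v ` {0..1}"
  proof clarify
    fix x
    have "v x = v (x + of_int (- \<lfloor>x\<rfloor>))" by (rule plus_of_int[symmetric])
    moreover have "x + of_int (- \<lfloor>x\<rfloor>) \<in> {0..1}" by simp linarith
    ultimately show "v x \<in> v ` {0..1}" by (rule image_eqI)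
  qed
  moreover have "compact (v ` {0..1})"
    using assms unfolding cohom_solution_def
    by (intro compact_continuous_image) (auto intro: continuous_on_subset)
  ultimately show ?thesis by (meson bounded_subset compact_imp_bounded)
qed

lemma bounded_curlicue_if_cohom_solution:
  assumes "cohom_solution \<Phi> v"
  shows "bounded (curlicue (\<lambda>n. (\<Phi> ^^ n) x\<^sub>0))"
proof -
  obtain B where B: "\<And>x. norm (v x) \<le> B"
    using bounded_range_cohom_solution[OF assms] by (auto simp: bounded_iff)
  have "norm (v y - v x\<^sub>0) \<le> 2 * B" for y
    using norm_triangle_ineq4[of "v y" "v x\<^sub>0"] B[of y] B[of x\<^sub>0] by linarith
  then have "bounded (range (curlicue_vertex (\<lambda>n. (\<Phi> ^^ n) x\<^sub>0)))"
    unfolding bounded_iff cohom_solution_curlicue_vertex[OF assms] by blast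
  then show ?thesis by (simp add: bounded_curlicue_iff)
qed

section \<open>Area of \<open>\<epsilon>\<close>-neighbourhoods\<close>

lemma eps_nbhd_eq_UN_ball: "eps_nbhd S \<epsilon> = (\<Union>x\<in>S. ball x \<epsilon>)"
  unfolding eps_nbhd_def by (auto simp: ball_def)

lemma open_eps_nbhd: "open (eps_nbhd S \<epsilon>)"
  unfolding eps_nbhd_eq_UN_ball by (intro open_UN) auto

lemma bounded_eps_nbhd:
  assumes "bounded S"
  shows "bounded (eps_nbhd S \<epsilon>)"
proof -
  obtain a where a: "\<And>x. x \<in> S \<Longrightarrow> norm x \<le> a" using assms by (auto simp: bounded_iff)
  have "eps_nbhd S \<epsilon> \<subseteq> cball 0 (a + \<epsilon>)"
  proof
    fix y assume "y \<in> eps_nbhd S \<epsilon>"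
    then obtain x where "x \<in> S" "dist x y < \<epsilon>" by (auto simp: eps_nbhd_def)
    then have "norm x \<le> a" "norm (y - x) < \<epsilon>"
      using a by (auto simp: dist_norm norm_minus_commute)
    then show "y \<in> cball 0 (a + \<epsilon>)" using norm_triangle_ineq[of x "y - x"] by simp
  qed
  then show ?thesis by (rule bounded_subset[OF bounded_cball])
qed

lemma square_subset_ball:
  "box (q - Complex (r / 2) (r / 2)) (q + Complex (r / 2) (r / 2)) \<subseteq> ball q r"
proof
  fix y assume "y \<in> box (q - Complex (r / 2) (r / 2)) (q + Complex (r / 2) (r / 2))"
  then have "Re q - r / 2 < Re y \<and> Re y < Re q + r / 2 \<and> Im q - r / 2 < Im y \<and> Im y < Im q + r / 2"
    by (simp add: mem_box Basis_complex_def)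
  then have "\<bar>Re (y - q)\<bar> < r / 2" "\<bar>Im (y - q)\<bar> < r / 2"
    unfolding minus_complex.sel abs_less_iff by linarith+
  then have "norm (y - q) < r" using cmod_le[of "y - q"] by linarith
  then show "y \<in> ball q r" by (simp add: dist_norm norm_minus_commute)
qed

lemma measure_square:
  assumes "0 < r"
  shows "measure lborel (box (q - Complex (r / 2) (r / 2)) (q + Complex (r / 2) (r / 2))) = r\<^sup>2"
  using assms by (simp add: measure_lborel_box_eq Basis_complex_def power2_eq_square)

lemma measure_eps_nbhd_ge_card:
  fixes S :: "complex set" and q :: "'k \<Rightarrow> complex"
  assumes "bounded S" "0 < \<epsilon>" "finite K" "q ` K \<subseteq> S"
    and separated: "\<And>i j. i \<in> K \<Longrightarrow> j \<in> K \<Longrightarrow> i \<noteq> j \<Longrightarrow> 2 * \<epsilon> \<le> dist (q i) (q j)"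
  shows "real (card K) * \<epsilon>\<^sup>2 \<le> measure lborel (eps_nbhd S \<epsilon>)"
proof -
  define square where
    "square i = box (q i - Complex (\<epsilon> / 2) (\<epsilon> / 2)) (q i + Complex (\<epsilon> / 2) (\<epsilon> / 2))" for i
  have disj: "disjoint_family_on square K"
    unfolding disjoint_family_on_def
  proof (intro ballI impI)
    fix i j assume "i \<in> K" "j \<in> K" "i \<noteq> j"
    then have "ball (q i) \<epsilon> \<inter> ball (q j) \<epsilon> = {}"
      using separated by (intro disjoint_ballI) simp
    then show "square i \<inter> square j = {}" using square_subset_ball unfolding square_def by blast
  qed
  have "emeasure lborel (square i) \<noteq> \<infinity>" for i
    unfolding square_def using emeasure_bounded_finite[OF bounded_box] by (rule less_imp_neq)
  then have "measure lborel (\<Union>i\<in>K. square i) = (\<Sum>i\<in>K. measure lborel (square i))"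
    by (intro measure_finite_Union[OF assms(3) _ disj]) (auto simp: square_def)
  also have "\<dots> = real (card K) * \<epsilon>\<^sup>2"
    using assms(2) by (simp add: square_def measure_square)
  finally have "measure lborel (\<Union>i\<in>K. square i) = real (card K) * \<epsilon>\<^sup>2" .
  moreover have "(\<Union>i\<in>K. square i) \<subseteq> eps_nbhd S \<epsilon>"
    using square_subset_ball assms(4) unfolding eps_nbhd_eq_UN_ball square_def by blast
  moreover have "eps_nbhd S \<epsilon> \<in> fmeasurable lborel"
    using open_eps_nbhd emeasure_bounded_finite[OF bounded_eps_nbhd[OF assms(1)]]
    by (intro fmeasurableI) auto
  moreover have "(\<Union>i\<in>K. square i) \<in> sets lborel"
    unfolding square_def sets_lborel by (intro borel_open open_UN) auto
  ultimately show ?thesis by (metis measure_mono_fmeasurable)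
qed

lemma eventually_setdist_gt:
  fixes S :: "'i \<Rightarrow> 'a::heine_borel set"
  assumes "finite I" and "\<And>i. i \<in> I \<Longrightarrow> compact (S i)" and "\<And>i. i \<in> I \<Longrightarrow> S i \<noteq> {}"
    and "\<And>i j. i \<in> I \<Longrightarrow> j \<in> I \<Longrightarrow> i \<noteq> j \<Longrightarrow> S i \<inter> S j = {}"
  shows "\<forall>\<^sub>F \<epsilon> in at_right 0. \<forall>i\<in>I. \<forall>j\<in>I. i \<noteq> j \<longrightarrow> 2 * \<epsilon> < setdist (S i) (S j)"
proof -
  have gap: "0 < setdist (S i) (S j)" if "i \<in> I" "j \<in> I" "i \<noteq> j" for i j
    using assms(2-4)[OF that(1)] assms(2-4)[OF that(2)] assms(4)[OF that]
      setdist_eq_0_compact_closed[of "S i" "S j"]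
    by (auto simp: compact_imp_closed order.strict_iff_order)
  have "((\<lambda>\<epsilon>. 2 * \<epsilon>) \<longlongrightarrow> 0) (at_right (0::real))"
    by (auto intro!: tendsto_eq_intros)
  then have "\<forall>\<^sub>F \<epsilon> in at_right 0. 2 * \<epsilon> < setdist (S i) (S j)" if "i \<in> I" "j \<in> I" "i \<noteq> j" for i j
    using gap[OF that] by (rule order_tendstoD(2))
  then show ?thesis using assms(1)
    by (auto intro!: eventually_ball_finite)
qed

lemma dist_on_line:
  fixes p d :: "'a::real_normed_field"
  assumes "norm d = 1"
  shows "dist (p + of_real s * d) (p + of_real t * d) = \<bar>s - t\<bar>"
proof -
  have "(p + of_real s * d) - (p + of_real t * d) = of_real (s - t) * d"
    by (simp add: algebra_simps)
  then show ?thesis using assms by (simp only: dist_norm norm_mult norm_of_real) simp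
qed

lemma dist_grid_points_on_line:
  fixes p d :: "'a::real_normed_field"
  assumes "norm d = 1" "0 < \<epsilon>" "j \<noteq> j'"
  shows "2 * \<epsilon> \<le> dist (p + of_real (s + 2 * \<epsilon> * real j) * d) (p + of_real (s + 2 * \<epsilon> * real j') * d)"
proof -
  have "1 \<le> \<bar>real j - real j'\<bar>" using assms(3) by linarith
  then have "2 * \<epsilon> \<le> 2 * \<epsilon> * \<bar>real j - real j'\<bar>" using assms(2) by simp
  also have "\<dots> = \<bar>(s + 2 * \<epsilon> * real j) - (s + 2 * \<epsilon> * real j')\<bar>"
    using assms(2) by (simp add: abs_mult flip: right_diff_distrib)
  also have "\<dots> = dist (p + of_real (s + 2 * \<epsilon> * real j) * d) (p + of_real (s + 2 * \<epsilon> * real j') * d)"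
    by (rule dist_on_line[OF assms(1), symmetric])
  finally show ?thesis .
qed

lemma measure_eps_nbhd_ge_segments:
  fixes S :: "complex set" and p d :: "'i \<Rightarrow> complex" and s :: "'i \<Rightarrow> real" and L :: real
  defines "seg i \<equiv> (\<lambda>t. p i + of_real t * d i) ` {s i..s i + L}"
  assumes S: "bounded S" and I: "finite I" and L: "0 \<le> L" and \<epsilon>: "0 < \<epsilon>"
    and unit: "\<And>i. i \<in> I \<Longrightarrow> norm (d i) = 1"
    and seg_in_S: "\<And>i. i \<in> I \<Longrightarrow> seg i \<subseteq> S"
    and far: "\<And>i j. i \<in> I \<Longrightarrow> j \<in> I \<Longrightarrow> i \<noteq> j \<Longrightarrow> 2 * \<epsilon> < setdist (seg i) (seg j)"
  shows "real (card I) * L / 2 * \<epsilon> \<le> measure lborel (eps_nbhd S \<epsilon>)"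
proof -
  define J where "J = nat \<lfloor>L / (2 * \<epsilon>)\<rfloor>"
  define q where "q = (\<lambda>(i, j). p i + of_real (s i + 2 * \<epsilon> * real j) * d i)"
  have q_seg: "q (i, j) \<in> seg i" if "j \<le> J" for i j
  proof -
    have "real j \<le> real J" using that by simp
    also have "\<dots> \<le> L / (2 * \<epsilon>)" unfolding J_def using L \<epsilon> by (intro of_nat_floor) simp
    finally have "2 * \<epsilon> * real j \<in> {0..L}" using \<epsilon> by (simp add: field_simps)
    then show ?thesis
      unfolding q_def seg_def by (intro image_eqI[of _ _ "s i + 2 * \<epsilon> * real j"]) simp_all
  qed
  have packing: "real (card (I \<times> {..J})) * \<epsilon>\<^sup>2 \<le> measure lborel (eps_nbhd S \<epsilon>)"
  proof (rule measure_eps_nbhd_ge_card[OF S \<epsilon>])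
    show "finite (I \<times> {..J})" using I by simp
    show "q ` (I \<times> {..J}) \<subseteq> S" using q_seg seg_in_S by fastforce
    fix a b assume a: "a \<in> I \<times> {..J}" and b: "b \<in> I \<times> {..J}" and "a \<noteq> b"
    obtain i j i' j' where ab: "a = (i, j)" "b = (i', j')" by fastforce
    show "2 * \<epsilon> \<le> dist (q a) (q b)"
    proof (cases "i = i'")
      case True
      then have "j \<noteq> j'" using \<open>a \<noteq> b\<close> ab by simp
      moreover have "norm (d i) = 1" using a ab by (simp add: unit)
      ultimately show ?thesis
        using dist_grid_points_on_line[OF _ \<epsilon>] unfolding ab q_def by (simp only: prod.case True)
    next
      case False
      then have "2 * \<epsilon> < setdist (seg i) (seg i')" using a b ab by (intro far) auto
      also have "\<dots> \<le> dist (q a) (q b)"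
        using a b ab q_seg by (auto intro: setdist_le_dist)
      finally show ?thesis by simp
    qed
  qed
  have "L / 2 * \<epsilon> = L / (2 * \<epsilon>) * \<epsilon>\<^sup>2" using \<epsilon> by (simp add: power2_eq_square)
  also have "\<dots> \<le> (real J + 1) * \<epsilon>\<^sup>2" unfolding J_def by (intro mult_right_mono) (linarith, simp)
  finally have "real (card I) * L / 2 * \<epsilon> \<le> real (card I) * (real J + 1) * \<epsilon>\<^sup>2"
    by (simp add: mult_left_mono mult.assoc)
  also have "\<dots> \<le> measure lborel (eps_nbhd S \<epsilon>)"
    using packing by (simp add: card_cartesian_product distrib_left distrib_right)
  finally show ?thesis .
qed

lemma eventually_measure_eps_nbhd_ge_segments:
  fixes S :: "complex set" and p d :: "'i \<Rightarrow> complex" and s :: "'i \<Rightarrow> real" and L :: real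
  defines "seg i \<equiv> (\<lambda>t. p i + of_real t * d i) ` {s i..s i + L}"
  assumes S: "bounded S" and I: "finite I" and L: "0 < L"
    and unit: "\<And>i. i \<in> I \<Longrightarrow> norm (d i) = 1"
    and seg_in_S: "\<And>i. i \<in> I \<Longrightarrow> seg i \<subseteq> S"
    and disjoint: "\<And>i j. i \<in> I \<Longrightarrow> j \<in> I \<Longrightarrow> i \<noteq> j \<Longrightarrow> seg i \<inter> seg j = {}"
  shows "\<forall>\<^sub>F \<epsilon> in at_right 0. real (card I) * L / 2 \<le> measure lborel (eps_nbhd S \<epsilon>) / \<epsilon>"
proof -
  have "\<forall>\<^sub>F \<epsilon> in at_right 0. \<forall>i\<in>I. \<forall>j\<in>I. i \<noteq> j \<longrightarrow> 2 * \<epsilon> < setdist (seg i) (seg j)"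
  proof (rule eventually_setdist_gt[OF I _ _ disjoint])
    show "compact (seg i)" for i
      unfolding seg_def by (intro compact_continuous_image continuous_intros) simp_all
    show "seg i \<noteq> {}" for i using L by (simp add: seg_def)
  qed
  moreover have "\<forall>\<^sub>F \<epsilon> in at_right 0. 0 < (\<epsilon>::real)" by (rule eventually_at_right_less)
  ultimately show ?thesis
  proof eventually_elim
    case (elim \<epsilon>)
    then have "0 < \<epsilon>"
      and far: "\<And>i j. i \<in> I \<Longrightarrow> j \<in> I \<Longrightarrow> i \<noteq> j \<Longrightarrow> 2 * \<epsilon> < setdist (seg i) (seg j)"
      by auto
    have "real (card I) * L / 2 * \<epsilon> \<le> measure lborel (eps_nbhd S \<epsilon>)"
      by (rule measure_eps_nbhd_ge_segments[OF S I less_imp_le[OF L] \<open>0 < \<epsilon>\<close> unit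
            seg_in_S[unfolded seg_def] far[unfolded seg_def]])
    then show ?case using \<open>0 < \<epsilon>\<close> by (simp add: pos_le_divide_eq)
  qed
qed

section \<open>Bounded curlicues of minimal maps are superficial\<close>

definition curlicue_line :: "(nat \<Rightarrow> real) \<Rightarrow> nat \<Rightarrow> real \<Rightarrow> complex" where
  "curlicue_line u n t = curlicue_vertex u n + of_real t * e2pi (u n)"

lemma curlicue_line_in_curlicue:
  assumes "0 \<le> t" "t < 1"
  shows "curlicue_line u n t \<in> curlicue u"
proof -
  have "\<lfloor>real n + t\<rfloor> = int n" using assms by (simp add: floor_eq_iff)
  then have "curlicue_path u (real n + t) = curlicue_line u n t"
    by (simp add: curlicue_path_def curlicue_line_def e2pi_def)
  moreover have "real n + t \<in> {0..}" using assms by simp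
  ultimately show ?thesis unfolding curlicue_def by (metis image_eqI)
qed

lemma curlicue_line_inj: "curlicue_line u n s = curlicue_line u n t \<Longrightarrow> s = t"
  by (simp add: curlicue_line_def)

lemma nonparallel_lines_meet_once:
  fixes a b v w :: complex
  assumes "Im (v * cnj w) \<noteq> 0"
    and "a + of_real s * v = b + of_real t * w" "a + of_real s' * v = b + of_real t' * w"
  shows "s = s'"
proof -
  have "(a + of_real s * v) - (a + of_real s' * v) = (b + of_real t * w) - (b + of_real t' * w)"
    using assms(2,3) by simp
  then have "of_real (s - s') * v = of_real (t - t') * w"
    by (simp add: algebra_simps)
  then have "Im (of_real (s - s') * v * cnj w) = Im (of_real (t - t') * (w * cnj w))"
    by (simp add: mult.assoc)
  then have "(s - s') * Im (v * cnj w) = 0"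
    by (simp add: complex_mult_cnj mult.assoc)
  then show ?thesis using assms(1) by simp
qed

lemma card_line_crossings_le:
  fixes a v :: complex and b w :: "'b \<Rightarrow> complex"
  assumes "finite B" and nonparallel: "\<And>i. i \<in> B \<Longrightarrow> Im (v * cnj (w i)) \<noteq> 0"
  defines "X \<equiv> {s. \<exists>i\<in>B. \<exists>t. a + of_real s * v = b i + of_real t * w i}"
  shows "finite X" "card X \<le> card B"
proof -
  define crossing where "crossing i = (SOME s. \<exists>t. a + of_real s * v = b i + of_real t * w i)" for i
  have "X \<subseteq> crossing ` B"
  proof
    fix s assume "s \<in> X"
    then obtain i t where i: "i \<in> B" "a + of_real s * v = b i + of_real t * w i"
      unfolding X_def by blast
    have "\<exists>t. a + of_real (crossing i) * v = b i + of_real t * w i"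
      unfolding crossing_def by (rule someI) (rule exI, rule i(2))
    then have "s = crossing i"
      using nonparallel_lines_meet_once[OF nonparallel[OF i(1)] i(2)] by blast
    then show "s \<in> crossing ` B" using i(1) by blast
  qed
  then show "finite X" "card X \<le> card B"
    using assms(1) by (auto intro: finite_subset card_mono[THEN order_trans] card_image_le)
qed

definition grid_interval :: "nat \<Rightarrow> nat \<Rightarrow> real set" where
  "grid_interval N k = {real k / (2 * real N) .. real k / (2 * real N) + 1 / (4 * real N)}"

lemma grid_interval_scaled:
  assumes "0 < N"
  shows "t \<in> grid_interval N k \<longleftrightarrow> 2 * real k \<le> 4 * real N * t \<and> 4 * real N * t \<le> 2 * real k + 1"
  using assms by (simp add: grid_interval_def field_simps)

lemma grid_interval_unique:
  assumes "0 < N" "t \<in> grid_interval N k" "t \<in> grid_interval N k'"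
  shows "k = k'"
  using assms(2,3) unfolding grid_interval_scaled[OF assms(1)] by linarith

lemma grid_interval_subset:
  assumes "k < 2 * N"
  shows "grid_interval N k \<subseteq> {0..<1}"
proof
  fix t assume "t \<in> grid_interval N k"
  moreover have "0 < N" using assms by simp
  ultimately have "0 \<le> 4 * real N * t" "4 * real N * t < 4 * real N * 1"
    using assms unfolding grid_interval_scaled[OF \<open>0 < N\<close>] by linarith+
  then show "t \<in> {0..<1}" using \<open>0 < N\<close> by (simp add: zero_le_mult_iff)
qed

lemma card_grid_intervals_avoiding:
  assumes "0 < N" "finite T"
  shows "2 * N - card T \<le> card {k. k < 2 * N \<and> grid_interval N k \<inter> T = {}}"
proof -
  define hit where "hit = {k. k < 2 * N \<and> grid_interval N k \<inter> T \<noteq> {}}"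
  define f where "f k = (SOME t. t \<in> grid_interval N k \<inter> T)" for k
  have f: "f k \<in> grid_interval N k \<inter> T" if "k \<in> hit" for k
    using that unfolding hit_def f_def by (metis (mono_tags, lifting) ex_in_conv mem_Collect_eq someI)
  have "inj_on f hit"
    using f grid_interval_unique[OF assms(1)] by (metis IntD1 inj_onI)
  moreover have "f ` hit \<subseteq> T" using f by blast
  ultimately have "card hit \<le> card T" using assms(2) by (rule card_inj_on_le)
  moreover have "{k. k < 2 * N \<and> grid_interval N k \<inter> T = {}} = {..<2 * N} - hit"
    by (auto simp: hit_def)
  moreover have "card {..<2 * N} - card hit \<le> card ({..<2 * N} - hit)"
    by (rule diff_card_le_card_Diff) (simp add: hit_def)
  ultimately show ?thesis by simp
qed

text \<open>Each of the other \<open>N - 1\<close> lines crosses the line of step \<open>a\<close> at most once, so at most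
  \<open>N - 1\<close> of the \<open>2N\<close> pieces of step \<open>a\<close> meet another step.\<close>

lemma curlicue_disjoint_pieces:
  fixes u :: "nat \<Rightarrow> real"
  assumes I: "finite I" "card I = N" "0 < N"
    and nonparallel: "\<And>a b. a \<in> I \<Longrightarrow> b \<in> I \<Longrightarrow> a \<noteq> b \<Longrightarrow> Im (e2pi (u a) * cnj (e2pi (u b))) \<noteq> 0"
  obtains G where "G \<subseteq> I \<times> {..<2 * N}" "N * N \<le> card G"
    "\<And>a k a' k'. (a, k) \<in> G \<Longrightarrow> (a', k') \<in> G \<Longrightarrow> (a, k) \<noteq> (a', k') \<Longrightarrow>
       curlicue_line u a ` grid_interval N k \<inter> curlicue_line u a' ` grid_interval N k' = {}"
proof -
  define crossings where
    "crossings a = {s. \<exists>b\<in>I - {a}. \<exists>t. curlicue_line u a s = curlicue_line u b t}" for a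
  define G where "G = (SIGMA a:I. {k. k < 2 * N \<and> grid_interval N k \<inter> crossings a = {}})"
  have crossings: "finite (crossings a)" "card (crossings a) \<le> N - 1" if "a \<in> I" for a
    using card_line_crossings_le[of "I - {a}" "e2pi (u a)" "\<lambda>b. e2pi (u b)" "curlicue_vertex u a"
        "curlicue_vertex u"] nonparallel that I
    unfolding crossings_def curlicue_line_def by auto
  have "N \<le> card {k. k < 2 * N \<and> grid_interval N k \<inter> crossings a = {}}" if "a \<in> I" for a
    using card_grid_intervals_avoiding[OF I(3) crossings(1)[OF that]] crossings(2)[OF that]
    by linarith
  then have "N * N \<le> card G"
    using I(1,2) sum_bounded_below[of I N] unfolding G_def by simp
  moreover have "curlicue_line u a ` grid_interval N k \<inter> curlicue_line u a' ` grid_interval N k' = {}"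
    if "(a, k) \<in> G" "(a', k') \<in> G" "(a, k) \<noteq> (a', k')" for a k a' k'
  proof (rule ccontr)
    assume "curlicue_line u a ` grid_interval N k \<inter> curlicue_line u a' ` grid_interval N k' \<noteq> {}"
    then obtain t t' where t: "t \<in> grid_interval N k" "t' \<in> grid_interval N k'"
      and eq: "curlicue_line u a t = curlicue_line u a' t'" by blast
    show False
    proof (cases "a = a'")
      case True
      then have "t = t'" using eq by (simp add: curlicue_line_inj)
      then show False using grid_interval_unique[OF I(3)] t True that(3) by blast
    next
      case False
      then have "t \<in> crossings a" using that(2) eq by (auto simp: crossings_def G_def)
      then show False using that(1) t(1) by (auto simp: G_def)
    qed
  qed
  moreover have "G \<subseteq> I \<times> {..<2 * N}" by (auto simp: G_def)
  ultimately show ?thesis using that by blast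
qed

lemma eventually_measure_eps_nbhd_curlicue_ge:
  assumes bounded: "bounded (curlicue u)" and I: "finite I" "card I = N" "0 < N"
    and nonparallel: "\<And>a b. a \<in> I \<Longrightarrow> b \<in> I \<Longrightarrow> a \<noteq> b \<Longrightarrow> Im (e2pi (u a) * cnj (e2pi (u b))) \<noteq> 0"
  shows "\<forall>\<^sub>F \<epsilon> in at_right 0. real N / 8 \<le> measure lborel (eps_nbhd (curlicue u) \<epsilon>) / \<epsilon>"
proof -
  obtain G where G: "G \<subseteq> I \<times> {..<2 * N}" "N * N \<le> card G"
    and disjoint: "\<And>a k a' k'. (a, k) \<in> G \<Longrightarrow> (a', k') \<in> G \<Longrightarrow> (a, k) \<noteq> (a', k') \<Longrightarrow>
       curlicue_line u a ` grid_interval N k \<inter> curlicue_line u a' ` grid_interval N k' = {}"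
    using curlicue_disjoint_pieces[OF I, of u] nonparallel by metis
  have "finite G" using G(1) I(1) finite_subset by blast
  have seg: "(\<lambda>t. curlicue_vertex u (fst i) + of_real t * e2pi (u (fst i))) `
      {real (snd i) / (2 * real N)..real (snd i) / (2 * real N) + 1 / (4 * real N)}
    = curlicue_line u (fst i) ` grid_interval N (snd i)" for i
    by (simp add: curlicue_line_def[abs_def] grid_interval_def)
  have area: "\<forall>\<^sub>F \<epsilon> in at_right 0.
      real (card G) * (1 / (4 * real N)) / 2 \<le> measure lborel (eps_nbhd (curlicue u) \<epsilon>) / \<epsilon>"
  proof (rule eventually_measure_eps_nbhd_ge_segments[OF bounded \<open>finite G\<close>,
      where p = "\<lambda>i. curlicue_vertex u (fst i)" and d = "\<lambda>i. e2pi (u (fst i))"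
        and s = "\<lambda>i. real (snd i) / (2 * real N)"], unfold seg)
    show "0 < 1 / (4 * real N)" using I(3) by simp
    fix i assume "i \<in> G"
    then show "norm (e2pi (u (fst i))) = 1" by simp
    have "grid_interval N (snd i) \<subseteq> {0..<1}"
      using \<open>i \<in> G\<close> G(1) by (intro grid_interval_subset) auto
    then show "curlicue_line u (fst i) ` grid_interval N (snd i) \<subseteq> curlicue u"
      using curlicue_line_in_curlicue by force
    fix j assume "j \<in> G" "i \<noteq> j"
    then show "curlicue_line u (fst i) ` grid_interval N (snd i) \<inter>
        curlicue_line u (fst j) ` grid_interval N (snd j) = {}"
      using \<open>i \<in> G\<close> disjoint[of "fst i" "snd i" "fst j" "snd j"] by simp
  qed
  have "real N * real N \<le> real (card G)" using G(2) by (metis of_nat_le_iff of_nat_mult)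
  then have bound: "real N / 8 \<le> real (card G) * (1 / (4 * real N)) / 2"
    using I(3) by (simp add: field_simps)
  show ?thesis using area by (rule eventually_mono) (use bound in linarith)
qed

lemma superficial_if_nonparallel_steps:
  assumes bounded: "bounded (curlicue u)"
    and nonparallel: "\<And>N. \<exists>I. finite I \<and> card I = N \<and>
      (\<forall>a\<in>I. \<forall>b\<in>I. a \<noteq> b \<longrightarrow> Im (e2pi (u a) * cnj (e2pi (u b))) \<noteq> 0)"
  shows "superficial u"
proof -
  have "\<forall>\<^sub>F \<epsilon> in at_right 0. Z \<le> measure lborel (eps_nbhd (curlicue u) \<epsilon>) / \<epsilon>" for Z
  proof -
    define N where "N = nat \<lceil>8 * Z\<rceil> + 1"
    have "8 * Z \<le> real (nat \<lceil>8 * Z\<rceil>)" by (rule real_nat_ceiling_ge)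
    then have N: "0 < N" "Z \<le> real N / 8" unfolding N_def by simp_all
    obtain I where "finite I" "card I = N"
      and "\<And>a b. a \<in> I \<Longrightarrow> b \<in> I \<Longrightarrow> a \<noteq> b \<Longrightarrow> Im (e2pi (u a) * cnj (e2pi (u b))) \<noteq> 0"
      using nonparallel[of N] by blast
    then have "\<forall>\<^sub>F \<epsilon> in at_right 0. real N / 8 \<le> measure lborel (eps_nbhd (curlicue u) \<epsilon>) / \<epsilon>"
      using eventually_measure_eps_nbhd_curlicue_ge[OF bounded _ _ N(1)] by blast
    then show ?thesis by (rule eventually_mono) (use N(2) in linarith)
  qed
  then show ?thesis
    using bounded by (simp add: superficial_def filterlim_at_top)
qed

lemma exists_pairwise_unrelated:
  fixes R :: "nat \<Rightarrow> nat \<Rightarrow> bool"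
  assumes sym: "\<And>a b. R a b \<Longrightarrow> R b a" and finite: "\<And>a. finite {b. R a b}"
  shows "\<exists>I. finite I \<and> card I = N \<and> (\<forall>a\<in>I. \<forall>b\<in>I. a \<noteq> b \<longrightarrow> \<not> R a b)"
proof (induction N)
  case (Suc N)
  then obtain I where I: "finite I" "card I = N" "\<forall>a\<in>I. \<forall>b\<in>I. a \<noteq> b \<longrightarrow> \<not> R a b" by blast
  have "finite (I \<union> (\<Union>a\<in>I. {b. R a b}))" using I(1) finite by simp
  then obtain c where c: "c \<notin> I \<union> (\<Union>a\<in>I. {b. R a b})"
    using ex_new_if_finite[OF infinite_UNIV_nat] by blast
  then have "finite (insert c I) \<and> card (insert c I) = Suc N \<and>
      (\<forall>a\<in>insert c I. \<forall>b\<in>insert c I. a \<noteq> b \<longrightarrow> \<not> R a b)"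
    using I sym by auto
  then show ?case by blast
qed auto

lemma (in circle_lift) image_translate_Ints: "\<Phi> ` (+) y ` \<int> = (+) (\<Phi> y) ` \<int>"
  by (auto simp: Ints_def image_image add_int)

lemma (in circle_lift) image_periodic_orbit:
  assumes "0 < p" and periodic: "(\<Phi> ^^ p) w = w + of_int k"
  defines "T j \<equiv> (+) ((\<Phi> ^^ j) w) ` \<int>"
  shows "\<Phi> ` (\<Union>j<p. T j) = (\<Union>j<p. T j)"
proof -
  have "(+) (of_int k) ` \<int> = (\<int> :: real set)"
    by (auto intro!: image_eqI[where x = "x - of_int k" for x] Ints_diff)
  moreover have "(+) (w + of_int k) ` \<int> = (+) w ` (+) (of_int k) ` \<int>"
    by (simp add: image_image add.assoc)
  ultimately have "T p = T 0"
    unfolding T_def periodic by simp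
  have indices: "Suc ` {..<p} = insert p {1..<p}" "{..<p} = insert 0 {1..<p}"
    using assms(1) by (auto simp: image_Suc_lessThan)
  have "\<Phi> ` (\<Union>j<p. T j) = (\<Union>j\<in>Suc ` {..<p}. T j)"
    by (simp add: image_UN T_def image_translate_Ints)
  also have "\<dots> = (\<Union>j<p. T j)"
    by (subst indices(1), subst indices(2)) (simp add: \<open>T p = T 0\<close>)
  finally show ?thesis .
qed

context minimal_circle_lift
begin

text \<open>A periodic orbit mod 1 would be a countable, hence proper, closed invariant set.\<close>

lemma no_periodic_orbit:
  assumes "(\<Phi> ^^ p) w = w + of_int k"
  shows "p = 0"
proof (rule ccontr)
  assume "p \<noteq> 0"
  define C where "C = (\<Union>j<p. (+) ((\<Phi> ^^ j) w) ` \<int>)"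
  have mem_C: "x \<in> C \<longleftrightarrow> (\<exists>j<p. \<exists>l::int. x = (\<Phi> ^^ j) w + of_int l)" for x
    by (auto simp: C_def Ints_def)
  have "closed C" unfolding C_def by (intro closed_UN ballI closed_translation closed_Ints) simp
  moreover have "\<forall>x. x \<in> C \<longleftrightarrow> x + 1 \<in> C"
  proof (intro allI iffI)
    fix x assume "x \<in> C"
    then obtain j l where "j < p" "x = (\<Phi> ^^ j) w + of_int l" by (auto simp: mem_C)
    then have "j < p \<and> x + 1 = (\<Phi> ^^ j) w + of_int (l + 1)" by simp
    then show "x + 1 \<in> C" unfolding mem_C by blast
  next
    fix x assume "x + 1 \<in> C"
    then obtain j l where "j < p" "x + 1 = (\<Phi> ^^ j) w + of_int l" by (auto simp: mem_C)
    then have "j < p \<and> x = (\<Phi> ^^ j) w + of_int (l - 1)" by simp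
    then show "x \<in> C" unfolding mem_C by blast
  qed
  moreover have "\<Phi> ` C = C"
    using image_periodic_orbit[OF _ assms] \<open>p \<noteq> 0\<close> unfolding C_def by simp
  moreover have "C \<noteq> {}" using \<open>p \<noteq> 0\<close> mem_C[of w] by force
  moreover have "countable C" unfolding C_def by (intro countable_UN countable_image) (auto simp: Ints_def)
  then have "C \<noteq> UNIV" using uncountable_UNIV_real by auto
  ultimately show False using minimal[unfolded minimal_lift_def, rule_format, of C] by simp
qed

lemma orbit_diff_in_Ints_imp_eq:
  assumes "(\<Phi> ^^ m) x - (\<Phi> ^^ n) x \<in> \<int>"
  shows "m = n"
proof -
  have "m = n" if le: "n \<le> m" and diff: "(\<Phi> ^^ m) x - (\<Phi> ^^ n) x \<in> \<int>" for m n
  proof -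
    obtain k where "(\<Phi> ^^ m) x - (\<Phi> ^^ n) x = of_int k" using diff by (elim Ints_cases)
    moreover have "(\<Phi> ^^ (m - n)) ((\<Phi> ^^ n) x) = (\<Phi> ^^ (m - n + n)) x" by (simp add: funpow_add)
    ultimately have "(\<Phi> ^^ (m - n)) ((\<Phi> ^^ n) x) = (\<Phi> ^^ n) x + of_int k" using le by simp
    then have "m - n = 0" by (rule no_periodic_orbit)
    then show "m = n" using le by simp
  qed
  moreover have "(\<Phi> ^^ n) x - (\<Phi> ^^ m) x \<in> \<int>"
    using Ints_minus[OF assms] by simp
  ultimately show ?thesis using assms by (metis nle_le)
qed

text \<open>Steps \<open>a\<close> and \<open>b\<close> of the curlicue are parallel iff \<open>2(u\<^sub>a - u\<^sub>b) \<in> \<int>\<close>. The parity of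
  this integer determines \<open>b\<close>, so each step is parallel to at most one other step.\<close>

lemma finite_parallel_steps: "finite {b. 2 * ((\<Phi> ^^ a) x - (\<Phi> ^^ b) x) \<in> \<int>}"
proof (rule inj_on_finite[where B = "{0..<2::int}"])
  let ?u = "\<lambda>n. (\<Phi> ^^ n) x"
  show "inj_on (\<lambda>b. \<lfloor>2 * (?u a - ?u b)\<rfloor> mod 2) {b. 2 * (?u a - ?u b) \<in> \<int>}"
  proof (rule inj_onI)
    fix b b' assume "b \<in> {b. 2 * (?u a - ?u b) \<in> \<int>}" "b' \<in> {b. 2 * (?u a - ?u b) \<in> \<int>}"
      and "\<lfloor>2 * (?u a - ?u b)\<rfloor> mod 2 = \<lfloor>2 * (?u a - ?u b')\<rfloor> mod 2"
    then obtain i i' :: int where i: "2 * (?u a - ?u b) = of_int i" "2 * (?u a - ?u b') = of_int i'"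
      and "i mod 2 = i' mod 2" by (auto elim!: Ints_cases)
    then obtain m where "i - i' = 2 * m" by (metis dvdE mod_eq_dvd_iff)
    then have "2 * (?u b' - ?u b) = 2 * of_int m" using i by (simp add: algebra_simps flip: of_int_diff)
    then have "?u b' - ?u b \<in> \<int>" by (metis Ints_of_int mult_cancel_left zero_neq_numeral)
    then show "b = b'" using orbit_diff_in_Ints_imp_eq by metis
  qed
qed auto

lemma orbit_nonparallel_steps:
  fixes x\<^sub>0 :: real
  defines "u \<equiv> \<lambda>n. (\<Phi> ^^ n) x\<^sub>0"
  shows "\<exists>I. finite I \<and> card I = N \<and>
    (\<forall>a\<in>I. \<forall>b\<in>I. a \<noteq> b \<longrightarrow> Im (e2pi (u a) * cnj (e2pi (u b))) \<noteq> 0)"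
proof -
  define R where "R a b \<longleftrightarrow> 2 * (u a - u b) \<in> \<int>" for a b
  obtain I where I: "finite I" "card I = N" "\<forall>a\<in>I. \<forall>b\<in>I. a \<noteq> b \<longrightarrow> \<not> R a b"
    using exists_pairwise_unrelated[of R] finite_parallel_steps unfolding R_def u_def
    by (metis Ints_minus minus_diff_eq mult_minus_right)
  have "Im (e2pi (u a) * cnj (e2pi (u b))) \<noteq> 0" if "\<not> R a b" for a b
  proof
    assume "Im (e2pi (u a) * cnj (e2pi (u b))) = 0"
    then have "sin (2 * pi * (u a - u b)) = 0" by (simp only: Im_e2pi_mult_cnj)
    then obtain i :: int where "2 * pi * (u a - u b) = of_int i * pi"
      unfolding sin_zero_iff_int2 by blast
    then have "R a b" by (simp add: R_def)
    then show False using that by blast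
  qed
  then show ?thesis using I by blast
qed

end

theorem proposition3p5:
  fixes \<Phi> :: "real \<Rightarrow> real" and x0 :: real
  assumes "circle_homeo_lift \<Phi>" and "minimal_lift \<Phi>"
  shows "(bounded (curlicue (\<lambda>n. (\<Phi> ^^ n) x0)) \<and> superficial (\<lambda>n. (\<Phi> ^^ n) x0)
            \<longleftrightarrow> (\<exists>v. cohom_solution \<Phi> v))
       \<and> (bounded (curlicue (\<lambda>n. (\<Phi> ^^ n) x0)) \<longrightarrow>
            ((\<lambda>N. (\<Sum>k<N. exp (2 * of_real pi * \<i> * of_real ((\<Phi> ^^ k) x0))) / of_nat N)
               \<longlonglongrightarrow> 0)
          \<and> (\<exists>v. cohom_solution \<Phi> v \<and> v x0 = 0)
          \<and> (\<forall>v. cohom_solution \<Phi> v \<and> v x0 = 0 \<longrightarrow>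
               (\<forall>n. curlicue_vertex (\<lambda>n. (\<Phi> ^^ n) x0) n = v ((\<Phi> ^^ n) x0)
                    \<and> curlicue_vertex (\<lambda>n. (\<Phi> ^^ n) x0) n \<in> range v)))"
proof -
  interpret minimal_circle_lift \<Phi>
    using assms by unfold_locales
  let ?u = "\<lambda>n. (\<Phi> ^^ n) x0"
  have "superficial ?u" if "bounded (curlicue ?u)"
    using that orbit_nonparallel_steps by (rule superficial_if_nonparallel_steps)
  moreover have "(\<lambda>N. curlicue_vertex ?u N / of_nat N) \<longlonglongrightarrow> 0" if "bounded (curlicue ?u)"
    using that by (intro bounded_range_divide_of_nat_tendsto_0) (simp add: bounded_curlicue_iff)
  moreover have "\<exists>v. cohom_solution \<Phi> v \<and> v x0 = 0" if "bounded (curlicue ?u)"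
    using cohom_solution_if_bounded_curlicue[OF that] cohom_solution_diff_const by fastforce
  moreover have "curlicue_vertex ?u n = v (?u n)" if "cohom_solution \<Phi> v" "v x0 = 0" for v n
    using cohom_solution_curlicue_vertex[OF that(1)] that(2) by simp
  ultimately show ?thesis
    using cohom_solution_if_bounded_curlicue bounded_curlicue_if_cohom_solution
    by (auto simp: curlicue_vertex_def e2pi_def)
qed

end
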